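(* Let $\mathcal{H}$ be a separable infinite-dimensional complex Hilbert space and let $T\in\mathcal{B}(\mathcal{H})$ be quasinilpotent. Then the power set $\Lambda(T)$ is right closed; that is, $\sup Y\in\Lambda(T)$ for every nonempty subset $Y\subseteq\Lambda(T)$.
   Context: An operator $T\in\mathcal{B}(\mathcal{H})$ is quasinilpotent if $\sigma(T)=\{0\}$. For quasinilpotent $T$ and $x\in\mathcal{H}\setminus\{0\}$, set $k_x=k_x(T)=\limsup_{\lambda\to0}\frac{\ln\|(\lambda-T)^{-1}x\|}{\ln\|(\lambda-T)^{-1}\|}$, and define the power set $\Lambda(T)=\{k_x: x\neq0\}$ (it is a subset of $[0,1]$). A nonempty set $X\subseteq\mathbb{R}$ is called right closed if $\sup Y\in X$ for every nonempty bounded subset $Y$ of $X$. *)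

theory Defs
  imports "HOL-Analysis.Analysis" "HOL-Library.Liminf_Limsup"
begin

text \<open>A complex Hilbert space is modelled as a real Hilbert space (a type of class
  real_inner and complete_space) equipped with an orthogonal complex structure J
  (J real-linear, J (J x) = - x, J preserves the inner product). Complex scalar
  multiplication is (a + b i) x = a x + b J x, and the complex inner product is
  inner x y + i inner x (J y); its norm coincides with the real norm.\<close>

definition complex_structure :: "('h::real_inner \<Rightarrow> 'h) \<Rightarrow> bool" where
  "complex_structure J \<longleftrightarrow> linear J \<and> (\<forall>x. J (J x) = - x) \<and> (\<forall>x y. inner (J x) (J y) = inner x y)"

definition scaleJ :: "('h::real_vector \<Rightarrow> 'h) \<Rightarrow> complex \<Rightarrow> 'h \<Rightarrow> 'h" where
  "scaleJ J c x = Re c *\<^sub>R x + Im c *\<^sub>R J x"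

text \<open>Bounded complex-linear operators on H: bounded real-linear maps commuting with J
  (equivalently, with complex scalar multiplication).\<close>
definition cbounded :: "('h::real_normed_vector \<Rightarrow> 'h) \<Rightarrow> ('h \<Rightarrow> 'h) \<Rightarrow> bool" where
  "cbounded J T \<longleftrightarrow> bounded_linear T \<and> (\<forall>x. T (J x) = J (T x))"

definition cinvertible :: "('h::real_normed_vector \<Rightarrow> 'h) \<Rightarrow> ('h \<Rightarrow> 'h) \<Rightarrow> bool" where
  "cinvertible J A \<longleftrightarrow> (\<exists>S. cbounded J S \<and> S \<circ> A = id \<and> A \<circ> S = id)"

definition shiftop :: "('h::real_normed_vector \<Rightarrow> 'h) \<Rightarrow> ('h \<Rightarrow> 'h) \<Rightarrow> complex \<Rightarrow> 'h \<Rightarrow> 'h" where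
  "shiftop J T l = (\<lambda>x. scaleJ J l x - T x)"

definition cspectrum :: "('h::real_normed_vector \<Rightarrow> 'h) \<Rightarrow> ('h \<Rightarrow> 'h) \<Rightarrow> complex set" where
  "cspectrum J T = {l. \<not> cinvertible J (shiftop J T l)}"

definition quasinilpotent :: "('h::real_normed_vector \<Rightarrow> 'h) \<Rightarrow> ('h \<Rightarrow> 'h) \<Rightarrow> bool" where
  "quasinilpotent J T \<longleftrightarrow> cbounded J T \<and> cspectrum J T = {0}"

definition resolvent :: "('h::real_normed_vector \<Rightarrow> 'h) \<Rightarrow> ('h \<Rightarrow> 'h) \<Rightarrow> complex \<Rightarrow> 'h \<Rightarrow> 'h" where
  "resolvent J T l = inv (shiftop J T l)"

definition kx :: "('h::real_normed_vector \<Rightarrow> 'h) \<Rightarrow> ('h \<Rightarrow> 'h) \<Rightarrow> 'h \<Rightarrow> real" where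
  "kx J T x = real_of_ereal (Limsup (at (0::complex))
      (\<lambda>l. ereal (ln (norm (resolvent J T l x)) / ln (onorm (resolvent J T l)))))"

definition power_set :: "('h::real_normed_vector \<Rightarrow> 'h) \<Rightarrow> ('h \<Rightarrow> 'h) \<Rightarrow> real set" where
  "power_set J T = {kx J T x | x. x \<noteq> 0}"

definition right_closed :: "real set \<Rightarrow> bool" where
  "right_closed X \<longleftrightarrow> X \<noteq> {} \<and> (\<forall>Y. Y \<noteq> {} \<and> Y \<subseteq> X \<and> bdd_above Y \<and> bdd_below Y \<longrightarrow> Sup Y \<in> X)"

end

theory Submission
  imports Defs
begin

text \<open>Suppose sup Y is not attained. Choose y n \<noteq> 0 whose exponents \<alpha> n = k (y n) increase
  strictly to s = sup Y, and interlace \<alpha> n < \<beta> n < p n < \<alpha> (n+1). Write R \<lambda> for the inverse of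
  \<lambda> - T and N \<lambda> for its norm; since 0 lies in the spectrum, N \<lambda> tends to infinity as \<lambda> \<rightarrow> 0,
  and k x is the limsup of ln \<parallel>R \<lambda> x\<parallel> / ln (N \<lambda>). On a fixed punctured disc
  \<parallel>R \<lambda> (y n)\<parallel> \<le> M n * N \<lambda> ^ \<beta> n, while \<parallel>R \<lambda> (y (n+1))\<parallel> \<ge> N \<lambda> ^ p n at points \<lambda> arbitrarily
  close to 0. A gliding-hump superposition x = \<Sum> c n y n with rapidly decreasing weights
  therefore satisfies \<parallel>R \<lambda> x\<parallel> \<le> 2 N \<lambda> ^ s near 0 and \<parallel>R (\<lambda> n) x\<parallel> \<ge> N (\<lambda> n) ^ \<beta> n along
  points \<lambda> n \<rightarrow> 0; hence k x = s.\<close>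

section \<open>Series and sequences\<close>

text \<open>The library states the comparison test for class banach, of which
  {real_inner, complete_space} is not registered as an instance.\<close>

lemma summable_comparison_complete:
  fixes f :: "nat \<Rightarrow> 'a::{real_normed_vector, complete_space}"
  assumes fg: "\<And>n. norm (f n) \<le> g n" and g: "summable g"
  shows "summable f"
proof -
  have partial_le: "norm ((\<Sum>i<n. f i) - (\<Sum>i<m. f i)) \<le> \<bar>(\<Sum>i<n. g i) - (\<Sum>i<m. g i)\<bar>"
    if "m \<le> n" for m n
  proof -
    have "norm ((\<Sum>i<n. f i) - (\<Sum>i<m. f i)) = norm (sum f {m..<n})"
      using sum_diff_nat_ivl[of 0 m n f] that by (simp add: atLeast0LessThan)
    also have "\<dots> \<le> sum g {m..<n}"
      using fg by (rule sum_norm_le)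
    also have "\<dots> = (\<Sum>i<n. g i) - (\<Sum>i<m. g i)"
      using sum_diff_nat_ivl[of 0 m n g] that by (simp add: atLeast0LessThan)
    finally show ?thesis by simp
  qed
  have "Cauchy (\<lambda>n. \<Sum>i<n. g i)"
    using g by (simp add: summable_iff_convergent Cauchy_convergent_iff)
  have "Cauchy (\<lambda>n. \<Sum>i<n. f i)"
  proof (unfold Cauchy_iff, intro allI impI)
    fix e :: real
    assume "0 < e"
    then obtain M where M: "\<And>m n. M \<le> m \<Longrightarrow> M \<le> n \<Longrightarrow> \<bar>(\<Sum>i<m. g i) - (\<Sum>i<n. g i)\<bar> < e"
      using \<open>Cauchy (\<lambda>n. \<Sum>i<n. g i)\<close> unfolding Cauchy_iff real_norm_def by blast
    have "norm ((\<Sum>i<m. f i) - (\<Sum>i<n. f i)) < e" if "M \<le> m" "M \<le> n" for m n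
      using partial_le[of m n] partial_le[of n m] M[OF that]
      by (cases "m \<le> n") (auto simp: norm_minus_commute abs_minus_commute)
    then show "\<exists>M. \<forall>m\<ge>M. \<forall>n\<ge>M. norm ((\<Sum>i<m. f i) - (\<Sum>i<n. f i)) < e"
      by blast
  qed
  then show ?thesis
    by (simp add: summable_iff_convergent Cauchy_convergent_iff)
qed

lemma norm_sum_le_geometric:
  fixes u :: "nat \<Rightarrow> 'a::real_normed_vector"
  assumes "0 \<le> A" and "\<And>i. i < k \<Longrightarrow> norm (u i) \<le> (1/2)^i * A"
  shows "norm (\<Sum>i<k. u i) \<le> 2 * A"
proof -
  have "norm (\<Sum>i<k. u i) \<le> (\<Sum>i<k. (1/2)^i * A)"
    using assms(2) by (intro sum_norm_le) auto
  also have "\<dots> = (\<Sum>i<k. (1/2::real)^i) * A"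
    by (rule sum_distrib_right[symmetric])
  also have "\<dots> = 2 * (1 - (1/2)^k) * A"
    by (simp add: sum_gp_strict)
  also have "\<dots> \<le> 2 * A"
    using assms(1) by (intro mult_right_mono) auto
  finally show ?thesis .
qed

lemma norm_suminf_le_geometric:
  fixes u :: "nat \<Rightarrow> 'a::{real_normed_vector, complete_space}"
  assumes u: "\<And>i. norm (u i) \<le> (1/2)^i * A"
  shows "summable u" and "norm (suminf u) \<le> 2 * A"
proof -
  show "summable u"
    by (rule summable_comparison_complete[OF u]) (intro summable_mult2 summable_geometric, simp)
  have "0 \<le> A"
    using u[of 0] by (simp add: order_trans[OF norm_ge_zero])
  then have "norm (\<Sum>i<n. u i) \<le> 2 * A" for n
    using u by (rule norm_sum_le_geometric)
  then show "norm (suminf u) \<le> 2 * A"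
    using \<open>summable u\<close> by (intro LIMSEQ_le_const2[OF tendsto_norm[OF summable_LIMSEQ]]) auto
qed

lemma norm_suminf_ge_hump:
  fixes u :: "nat \<Rightarrow> 'a::{real_normed_vector, complete_space}"
  assumes "0 \<le> A" and head: "\<And>i. i < m \<Longrightarrow> norm (u i) \<le> (1/2)^i * A"
    and tail: "\<And>i. norm (u (i + Suc m)) \<le> (1/2)^i * B" and "summable u"
  shows "norm (u m) - 2 * A - 2 * B \<le> norm (suminf u)"
proof -
  have "suminf u = (\<Sum>i. u (i + Suc m)) + ((\<Sum>i<m. u i) + u m)"
    using suminf_split_initial_segment[OF \<open>summable u\<close>, of "Suc m"] by simp
  then have "u m = (suminf u - (\<Sum>i. u (i + Suc m))) - (\<Sum>i<m. u i)"
    by (simp add: algebra_simps)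
  then have "norm (u m) \<le> norm (suminf u - (\<Sum>i. u (i + Suc m))) + norm (\<Sum>i<m. u i)"
    by (metis norm_triangle_ineq4)
  also have "\<dots> \<le> norm (suminf u) + norm (\<Sum>i. u (i + Suc m)) + norm (\<Sum>i<m. u i)"
    using norm_triangle_ineq4 by (rule add_right_mono)
  finally have "norm (u m) \<le> norm (suminf u) + norm (\<Sum>i. u (i + Suc m)) + norm (\<Sum>i<m. u i)" .
  moreover have "norm (\<Sum>i. u (i + Suc m)) \<le> 2 * B"
    using tail by (rule norm_suminf_le_geometric)
  moreover have "norm (\<Sum>i<m. u i) \<le> 2 * A"
    using \<open>0 \<le> A\<close> head by (rule norm_sum_le_geometric)
  ultimately show ?thesis by linarith
qed

lemma ln_ratio_less_iff:
  fixes N v b :: real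
  assumes "1 < N" "0 < v"
  shows "ln v / ln N < b \<longleftrightarrow> v < N powr b"
proof -
  have "ln v / ln N < b \<longleftrightarrow> ln v < b * ln N"
    using assms by (simp add: divide_less_eq)
  also have "b * ln N = ln (N powr b)"
    using assms by (simp add: ln_powr)
  also have "ln v < ln (N powr b) \<longleftrightarrow> v < N powr b"
    using assms by (intro ln_less_cancel_iff) auto
  finally show ?thesis .
qed

lemma ln_ratio_le_iff:
  fixes N v b :: real
  assumes "1 < N" "0 < v"
  shows "ln v / ln N \<le> b \<longleftrightarrow> v \<le> N powr b"
proof -
  have "ln v / ln N \<le> b \<longleftrightarrow> ln v \<le> b * ln N"
    using assms by (simp add: divide_le_eq)
  also have "b * ln N = ln (N powr b)"
    using assms by (simp add: ln_powr)
  also have "ln v \<le> ln (N powr b) \<longleftrightarrow> v \<le> N powr b"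
    using assms by (intro ln_le_cancel_iff) auto
  finally show ?thesis .
qed

lemma strict_mono_tendsto_Sup:
  fixes Y :: "real set"
  assumes "Y \<noteq> {}" "bdd_above Y" "Sup Y \<notin> Y"
  obtains a where "\<And>n. a n \<in> Y" "strict_mono a" "a \<longlonglongrightarrow> Sup Y"
proof -
  have below_Sup: "y < Sup Y" if "y \<in> Y" for y
    using cSup_upper[OF that assms(2)] that assms(3) by (cases "y = Sup Y") auto
  have approx: "\<exists>y\<in>Y. t < y" if "t < Sup Y" for t
    using less_cSup_iff[OF assms(1,2)] that by blast
  define P where "P n y \<longleftrightarrow> y \<in> Y \<and> Sup Y - inverse (real (Suc n)) < y" for n y
  have "\<exists>a. \<forall>n. P n (a n) \<and> a n < a (Suc n)"
  proof (rule dependent_nat_choice)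
    show "\<exists>y. P 0 y"
      using approx[of "Sup Y - 1"] by (auto simp: P_def)
  next
    fix y n
    assume "P n y"
    then have "max y (Sup Y - inverse (real (Suc (Suc n)))) < Sup Y"
      using below_Sup by (auto simp: P_def)
    then obtain y' where "y' \<in> Y" "max y (Sup Y - inverse (real (Suc (Suc n)))) < y'"
      using approx by blast
    then show "\<exists>y'. P (Suc n) y' \<and> y < y'"
      by (auto simp: P_def)
  qed
  then obtain a where a: "\<And>n. a n \<in> Y" "\<And>n. Sup Y - inverse (real (Suc n)) < a n"
    "\<And>n. a n < a (Suc n)"
    by (auto simp: P_def)
  have lower: "(\<lambda>n. Sup Y - inverse (real (Suc n))) \<longlonglongrightarrow> Sup Y"
    using tendsto_diff[OF tendsto_const LIMSEQ_inverse_real_of_nat, of "Sup Y"] by simp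
  have "\<forall>\<^sub>F n in sequentially. Sup Y - inverse (real (Suc n)) \<le> a n"
    using a(2) by (simp add: less_imp_le)
  moreover have "\<forall>\<^sub>F n in sequentially. a n \<le> Sup Y"
    using a(1) below_Sup by (simp add: less_imp_le)
  ultimately have "a \<longlonglongrightarrow> Sup Y"
    using lower tendsto_const by (rule tendsto_sandwich)
  with a show thesis
    using strict_mono_Suc_iff that by blast
qed

lemma interlacing_sequences:
  fixes \<alpha> :: "nat \<Rightarrow> real"
  assumes "strict_mono \<alpha>" "\<alpha> \<longlonglongrightarrow> s"
  obtains \<beta> p where "\<And>n. \<alpha> n < \<beta> n" "\<And>n. \<beta> n < p n" "\<And>n. p n < \<alpha> (Suc n)"
    "mono \<beta>" "\<beta> \<longlonglongrightarrow> s"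
proof
  let ?\<beta> = "\<lambda>n. (\<alpha> n + \<alpha> (Suc n)) / 2"
  have less: "\<alpha> n < \<alpha> (Suc n)" for n
    using \<open>strict_mono \<alpha>\<close> by (simp add: strict_mono_Suc_iff)
  then show "\<alpha> n < ?\<beta> n" "?\<beta> n < (?\<beta> n + \<alpha> (Suc n)) / 2" "(?\<beta> n + \<alpha> (Suc n)) / 2 < \<alpha> (Suc n)" for n
    by (simp_all add: field_simps)
  show "mono ?\<beta>"
    using strict_mono_mono[OF \<open>strict_mono \<alpha>\<close>] by (auto simp: mono_def intro: add_mono)
  have "?\<beta> \<longlonglongrightarrow> (s + s) / 2"
    using tendsto_add[OF \<open>\<alpha> \<longlonglongrightarrow> s\<close> LIMSEQ_Suc[OF \<open>\<alpha> \<longlonglongrightarrow> s\<close>]]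
    by (rule tendsto_divide) simp_all
  then show "?\<beta> \<longlonglongrightarrow> s"
    by simp
qed

lemma decreasing_weights_choice:
  fixes H :: "nat \<Rightarrow> real \<Rightarrow> 'a \<Rightarrow> bool" and g :: "nat \<Rightarrow> real \<Rightarrow> 'a \<Rightarrow> real"
  assumes H: "\<And>n d. 0 < d \<Longrightarrow> \<exists>z. H n d z"
    and g: "\<And>n d z. 0 < d \<Longrightarrow> H n d z \<Longrightarrow> 0 < g n d z"
  obtains e z where "\<And>j. 0 < e j" "\<And>j. e j \<le> 1" "\<And>j. e (Suc j) \<le> e j"
    "\<And>n. H n (e (Suc n)) (z n)" "\<And>n. e (Suc (Suc n)) \<le> g n (e (Suc n)) (z n)"
proof -
  define P where "P n dz \<longleftrightarrow> (n = 0 \<longrightarrow> fst dz = 1) \<and> 0 < fst dz \<and> H n (fst dz) (snd dz)"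
    for n dz
  have "\<exists>f. \<forall>n. P n (f n) \<and> fst (f (Suc n)) \<le> min (fst (f n)) (g n (fst (f n)) (snd (f n)))"
  proof (rule dependent_nat_choice)
    show "\<exists>dz. P 0 dz"
      using H[of 1 0] by (auto simp: P_def)
  next
    fix dz n
    assume "P n dz"
    then have "0 < min (fst dz) (g n (fst dz) (snd dz))"
      using g by (auto simp: P_def)
    with H obtain z where "H (Suc n) (min (fst dz) (g n (fst dz) (snd dz))) z"
      by blast
    with \<open>0 < min (fst dz) (g n (fst dz) (snd dz))\<close>
    show "\<exists>dz'. P (Suc n) dz' \<and> fst dz' \<le> min (fst dz) (g n (fst dz) (snd dz))"
      by (intro exI[of _ "(min (fst dz) (g n (fst dz) (snd dz)), z)"]) (simp add: P_def)
  qed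
  then obtain f where f: "\<And>n. P n (f n)"
    "\<And>n. fst (f (Suc n)) \<le> min (fst (f n)) (g n (fst (f n)) (snd (f n)))"
    by blast
  define e where "e j = fst (f (j - 1))" for j
  have e_Suc: "e (Suc j) \<le> e j" for j
    using f(2) by (cases j) (auto simp: e_def)
  have "e j \<le> 1" for j
    using lift_Suc_antimono_le[of e, OF e_Suc, of 0 j] f(1)[of 0] by (simp add: e_def P_def)
  with f e_Suc show thesis
    by (intro that[of e "snd \<circ> f"]) (auto simp: e_def P_def)
qed

section \<open>Operators commuting with a complex structure\<close>

lemma Cauchy_if_bounded_below:
  fixes T :: "'a::real_normed_vector \<Rightarrow> 'b::real_normed_vector"
  assumes "linear T" and below: "\<And>x. norm x \<le> B * norm (T x)" and "Cauchy (\<lambda>k. T (x k))"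
  shows "Cauchy x"
proof (rule metric_CauchyI)
  fix e :: real
  assume "0 < e"
  then obtain M where M: "\<And>i j. M \<le> i \<Longrightarrow> M \<le> j \<Longrightarrow> dist (T (x i)) (T (x j)) < e / (\<bar>B\<bar> + 1)"
    using metric_CauchyD[OF \<open>Cauchy (\<lambda>k. T (x k))\<close>] by (meson divide_pos_pos add_nonneg_pos abs_ge_zero zero_less_one)
  have "dist (x i) (x j) < e" if "M \<le> i" "M \<le> j" for i j
  proof -
    have "dist (x i) (x j) \<le> B * dist (T (x i)) (T (x j))"
      using below[of "x i - x j"] by (simp add: dist_norm linear_diff[OF \<open>linear T\<close>])
    also have "\<dots> \<le> (\<bar>B\<bar> + 1) * dist (T (x i)) (T (x j))"
      by (intro mult_right_mono) auto
    also have "\<dots> < e"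
      using M[OF that] by (simp add: pos_less_divide_eq mult.commute add_nonneg_pos)
    finally show ?thesis .
  qed
  then show "\<exists>M. \<forall>i\<ge>M. \<forall>j\<ge>M. dist (x i) (x j) < e"
    by blast
qed

lemma cinvertible_if_bounded_below_surj:
  fixes U :: "'h::real_normed_vector \<Rightarrow> 'h"
  assumes "cbounded J U" and below: "\<And>x. norm x \<le> B * norm (U x)" and "surj U"
  shows "cinvertible J U"
proof -
  interpret U: bounded_linear U
    using assms(1) by (simp add: cbounded_def)
  have "inj U"
  proof (rule injI)
    fix a b
    assume "U a = U b"
    then show "a = b"
      using below[of "a - b"] by (simp add: U.diff)
  qed
  define S where "S = inv U"
  have US: "U (S y) = y" for y
    unfolding S_def using \<open>surj U\<close> by (rule surj_f_inv_f)
  have SU: "S (U x) = x" for x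
    unfolding S_def using \<open>inj U\<close> by (rule inv_f_f)
  have "bounded_linear S"
  proof (rule bounded_linear_intro[where K = B])
    show "S (a + b) = S a + S b" for a b
      by (metis SU US U.add)
    show "S (r *\<^sub>R a) = r *\<^sub>R S a" for r a
      by (metis SU US U.scale)
    show "norm (S a) \<le> norm a * B" for a
      using below[of "S a"] by (simp add: US mult.commute)
  qed
  moreover have "S (J x) = J (S x)" for x
    using assms(1) by (metis SU US cbounded_def)
  ultimately show ?thesis
    unfolding cinvertible_def cbounded_def using SU US by (intro exI[of _ S]) auto
qed

locale complex_hilbert_space =
  fixes J :: "'h::real_inner \<Rightarrow> 'h"
  assumes complex_structure: "complex_structure J"
begin

lemma linear_J: "linear J"
  using complex_structure by (simp add: complex_structure_def)

lemma inner_J_J: "inner (J x) (J y) = inner x y"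
  using complex_structure by (simp add: complex_structure_def)

lemma norm_J: "norm (J x) = norm x"
  by (simp add: norm_eq_sqrt_inner inner_J_J)

lemma inner_J_self: "inner x (J x) = 0"
proof -
  have "inner (J x) (J (J x)) = inner x (J x)"
    by (rule inner_J_J)
  then show ?thesis
    using complex_structure by (simp add: complex_structure_def inner_commute)
qed

lemma norm_scaleJ: "norm (scaleJ J c x) = cmod c * norm x"
proof -
  have "(norm (scaleJ J c x))\<^sup>2 = (Re c)\<^sup>2 * (norm x)\<^sup>2 + (Im c)\<^sup>2 * (norm (J x))\<^sup>2"
    unfolding scaleJ_def power2_norm_eq_inner
    by (simp add: inner_add_left inner_add_right inner_J_self inner_commute[of "J x" x]
        power2_eq_square algebra_simps)
  also have "\<dots> = (cmod c * norm x)\<^sup>2"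
    by (simp add: norm_J cmod_def power_mult_distrib algebra_simps)
  finally show ?thesis
    by (simp add: power2_eq_iff_nonneg)
qed

lemma linear_scaleJ: "linear (scaleJ J c)"
proof -
  interpret J: linear J
    by (rule linear_J)
  show ?thesis
    by unfold_locales (simp_all add: scaleJ_def J.add J.scale algebra_simps)
qed

end

section \<open>The resolvent of a quasinilpotent operator near 0\<close>

locale quasinilpotent_operator = complex_hilbert_space J
  for J :: "'h::{real_inner, complete_space} \<Rightarrow> 'h" +
  fixes T :: "'h \<Rightarrow> 'h"
  assumes quasinilpotent: "quasinilpotent J T"
begin

abbreviation A where "A \<equiv> shiftop J T"
abbreviation R where "R \<equiv> resolvent J T"
abbreviation N where "N l \<equiv> onorm (R l)"

lemma bounded_linear_T: "bounded_linear T"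
  and T_J: "T (J x) = J (T x)"
  using quasinilpotent by (auto simp: quasinilpotent_def cbounded_def)

lemma linear_shiftop: "linear (A l)"
proof -
  interpret S: linear "scaleJ J l"
    by (rule linear_scaleJ)
  interpret T: bounded_linear T
    by (rule bounded_linear_T)
  show ?thesis
    unfolding shiftop_def by unfold_locales (simp_all add: S.add S.scale T.add T.scale algebra_simps)
qed

lemma shiftop_0: "A 0 x = - T x"
  by (simp add: shiftop_def scaleJ_def)

lemma cbounded_shiftop_0: "cbounded J (A 0)"
proof -
  interpret J: linear J
    by (rule linear_J)
  have "bounded_linear (A 0)"
    unfolding shiftop_0[abs_def] using bounded_linear_T by (rule bounded_linear_minus)
  moreover have "A 0 (J x) = J (A 0 x)" for x
    by (simp add: shiftop_0 T_J J.neg)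
  ultimately show ?thesis
    by (simp add: cbounded_def)
qed

lemma shiftop_diff: "A l x - A m x = scaleJ J (l - m) x"
  by (simp add: shiftop_def scaleJ_def algebra_simps)

lemma norm_shiftop_le: "norm (A l x) \<le> cmod l * norm x + norm (T x)"
  unfolding shiftop_def using norm_triangle_ineq4[of "scaleJ J l x" "T x"] by (simp add: norm_scaleJ)

lemma resolvent_inverse:
  assumes "l \<noteq> 0"
  shows "bounded_linear (R l)" and "R l (A l x) = x" and "A l (R l y) = y"
proof -
  have "l \<notin> cspectrum J T"
    using quasinilpotent assms by (simp add: quasinilpotent_def)
  then obtain S where S: "cbounded J S" "S \<circ> A l = id" "A l \<circ> S = id"
    by (auto simp: cspectrum_def cinvertible_def)
  have "R l = S"
    unfolding resolvent_def using S(3,2) by (rule inv_unique_comp)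
  show "bounded_linear (R l)" "R l (A l x) = x" "A l (R l y) = y"
    unfolding \<open>R l = S\<close> using S by (simp_all add: cbounded_def fun_eq_iff)
qed

lemma norm_resolvent_le: "l \<noteq> 0 \<Longrightarrow> norm (R l y) \<le> N l * norm y"
  by (rule onorm[OF resolvent_inverse(1)])

lemma norm_le_resolvent: "l \<noteq> 0 \<Longrightarrow> norm y \<le> (cmod l + onorm T) * norm (R l y)"
  using norm_shiftop_le[of l "R l y"] onorm[OF bounded_linear_T, of "R l y"] resolvent_inverse(3)[of l y]
  by (simp add: algebra_simps)

lemma onorm_resolvent_nonneg: "l \<noteq> 0 \<Longrightarrow> 0 \<le> N l"
  by (rule onorm_pos_le[OF resolvent_inverse(1)])

lemma resolvent_nonzero: "l \<noteq> 0 \<Longrightarrow> y \<noteq> 0 \<Longrightarrow> R l y \<noteq> 0"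
  using resolvent_inverse(3)[of l y] linear_0[OF linear_shiftop, of l] by force

lemma bounded_below_if_resolvent_bounded:
  assumes "m \<longlonglongrightarrow> 0" "\<And>k. m k \<noteq> 0" "\<And>k. N (m k) \<le> B"
  shows "norm x \<le> B * norm (T x)"
proof -
  have "0 \<le> B"
    using onorm_resolvent_nonneg[OF assms(2)] assms(3) order_trans by blast
  have "norm x \<le> B * (cmod (m k) * norm x + norm (T x))" for k
  proof -
    have "norm x = norm (R (m k) (A (m k) x))"
      using resolvent_inverse(2)[OF assms(2)] by simp
    also have "\<dots> \<le> N (m k) * norm (A (m k) x)"
      by (rule norm_resolvent_le[OF assms(2)])
    also have "\<dots> \<le> B * (cmod (m k) * norm x + norm (T x))"
      using assms(3) norm_shiftop_le \<open>0 \<le> B\<close> by (intro mult_mono) auto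
    finally show ?thesis .
  qed
  moreover have "(\<lambda>k. B * (cmod (m k) * norm x + norm (T x))) \<longlonglongrightarrow> B * (0 * norm x + norm (T x))"
    using assms(1) by (intro tendsto_intros) (simp add: tendsto_norm_zero)
  ultimately show ?thesis
    by (intro LIMSEQ_le_const) auto
qed

lemma surj_if_resolvent_bounded:
  assumes "m \<longlonglongrightarrow> 0" "\<And>k. m k \<noteq> 0" "\<And>k. N (m k) \<le> B"
  shows "\<exists>z. T z = y"
proof -
  interpret T: bounded_linear T
    by (rule bounded_linear_T)
  define x where "x k = R (m k) y" for k
  have Tx: "T (x k) = scaleJ J (m k) (x k) - y" for k
    using resolvent_inverse(3)[OF assms(2), of k y] by (auto simp: x_def shiftop_def algebra_simps)
  have "(\<lambda>k. scaleJ J (m k) (x k)) \<longlonglongrightarrow> 0"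
  proof (rule Lim_null_comparison)
    have "norm (x k) \<le> B * norm y" for k
      using norm_resolvent_le[OF assms(2), of k y] mult_right_mono[OF assms(3)[of k] norm_ge_zero[of y]]
      by (simp add: x_def)
    then show "\<forall>\<^sub>F k in sequentially. norm (scaleJ J (m k) (x k)) \<le> cmod (m k) * (B * norm y)"
      by (intro always_eventually allI) (simp add: norm_scaleJ mult_left_mono)
    show "(\<lambda>k. cmod (m k) * (B * norm y)) \<longlonglongrightarrow> 0"
      using assms(1) by (intro tendsto_mult_left_zero) (simp add: tendsto_norm_zero)
  qed
  then have Tlim: "(\<lambda>k. T (x k)) \<longlonglongrightarrow> - y"
    unfolding Tx using tendsto_diff[OF _ tendsto_const, of _ 0 sequentially y] by simp
  have "Cauchy x"
    using bounded_linear.linear[OF bounded_linear_T] bounded_below_if_resolvent_bounded[OF assms]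
      LIMSEQ_imp_Cauchy[OF Tlim]
    by (rule Cauchy_if_bounded_below)
  then obtain z where "x \<longlonglongrightarrow> z"
    by (auto simp: Cauchy_convergent_iff convergent_def)
  then have "(\<lambda>k. T (x k)) \<longlonglongrightarrow> T z"
    by (rule T.tendsto)
  then have "T z = - y"
    using Tlim by (rule LIMSEQ_unique)
  then show ?thesis
    by (metis T.neg minus_minus)
qed

text \<open>Since 0 lies in the spectrum, the resolvent cannot stay bounded along any sequence
  tending to 0: otherwise T would be bounded below and onto, hence invertible.\<close>

lemma onorm_resolvent_at_top: "filterlim N at_top (at 0)"
proof (rule ccontr)
  assume "\<not> ?thesis"
  then obtain B where "\<not> (\<forall>\<^sub>F l in at 0. B \<le> N l)"
    unfolding filterlim_at_top by blast
  then have "\<exists>l. l \<noteq> 0 \<and> cmod l < inverse (real (Suc k)) \<and> N l < B" for k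
    unfolding eventually_at by (auto simp: not_le)
  then obtain m where m: "\<And>k. m k \<noteq> 0" "\<And>k. cmod (m k) < inverse (real (Suc k))" "\<And>k. N (m k) < B"
    by metis
  have "m \<longlonglongrightarrow> 0"
  proof (rule Lim_null_comparison)
    show "\<forall>\<^sub>F k in sequentially. norm (m k) \<le> inverse (real (Suc k))"
      by (rule always_eventually) (use m(2) less_imp_le in blast)
  qed (rule LIMSEQ_inverse_real_of_nat)
  note bounded = this m(1) less_imp_le[OF m(3)]
  have "cbounded J (A 0)"
    by (rule cbounded_shiftop_0)
  moreover have "norm x \<le> B * norm (A 0 x)" for x
    using bounded_below_if_resolvent_bounded[OF bounded] by (simp add: shiftop_0)
  moreover have "surj (A 0)"
  proof -
    have "y \<in> range (A 0)" for y
    proof -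
      obtain z where "T z = - y"
        using surj_if_resolvent_bounded[OF bounded] by blast
      then have "y = A 0 z"
        by (simp add: shiftop_0)
      then show ?thesis
        by (rule range_eqI)
    qed
    then show ?thesis
      by blast
  qed
  ultimately have "cinvertible J (A 0)"
    by (rule cinvertible_if_bounded_below_surj)
  moreover have "0 \<in> cspectrum J T"
    using quasinilpotent by (simp add: quasinilpotent_def)
  ultimately show False
    by (simp add: cspectrum_def)
qed

text \<open>By the resolvent identity, R m = R l + (l - m) R l R m.\<close>

lemma onorm_resolvent_le_twice:
  assumes l: "l \<noteq> 0" and m: "m \<noteq> 0" and close: "N l * cmod (m - l) \<le> 1/2"
  shows "N m \<le> 2 * N l"
proof (rule onorm_bound)
  show "0 \<le> 2 * N l"
    using onorm_resolvent_nonneg[OF l] by simp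
next
  fix y
  interpret Rl: bounded_linear "R l"
    by (rule resolvent_inverse(1)[OF l])
  have "A l (R m y) = y + scaleJ J (l - m) (R m y)"
    using shiftop_diff[of l "R m y" m] resolvent_inverse(3)[OF m, of y] by (simp add: algebra_simps)
  then have "R m y = R l y + R l (scaleJ J (l - m) (R m y))"
    using resolvent_inverse(2)[OF l, of "R m y"] by (simp add: Rl.add)
  then have "norm (R m y) \<le> norm (R l y) + norm (R l (scaleJ J (l - m) (R m y)))"
    by (metis norm_triangle_ineq)
  also have "\<dots> \<le> N l * norm y + N l * cmod (m - l) * norm (R m y)"
    using norm_resolvent_le[OF l, of y] norm_resolvent_le[OF l, of "scaleJ J (l - m) (R m y)"]
    by (simp add: norm_scaleJ norm_minus_commute mult.assoc)
  also have "N l * cmod (m - l) * norm (R m y) \<le> 1/2 * norm (R m y)"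
    using close by (intro mult_right_mono) auto
  finally show "norm (R m y) \<le> 2 * N l * norm y"
    by simp
qed

lemma onorm_resolvent_bounded_on_compact:
  assumes "compact K" "0 \<notin> K"
  shows "\<exists>B. \<forall>l\<in>K. N l \<le> B"
proof -
  define r where "r l = 1 / (2 * (N l + 1))" for l
  have nonzero: "l \<in> K \<Longrightarrow> l \<noteq> 0" for l
    using assms(2) by auto
  have "l \<in> ball l (r l)" if "l \<in> K" for l
    using onorm_resolvent_nonneg[OF nonzero[OF that]] by (simp add: r_def)
  then have "K \<subseteq> (\<Union>l\<in>K. ball l (r l))"
    by blast
  from compactE_image[OF assms(1) _ this] obtain C
    where C: "C \<subseteq> K" "finite C" "K \<subseteq> (\<Union>l\<in>C. ball l (r l))"
    by blast
  have "N m \<le> Max (insert 0 ((\<lambda>l. 2 * N l) ` C))" if "m \<in> K" for m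
  proof -
    obtain l where l: "l \<in> C" "m \<in> ball l (r l)"
      using C(3) \<open>m \<in> K\<close> by auto
    have "l \<noteq> 0" "0 \<le> N l"
      using l(1) C(1) nonzero onorm_resolvent_nonneg by auto
    have "N l * cmod (m - l) \<le> N l * r l"
      using l(2) \<open>0 \<le> N l\<close> by (intro mult_left_mono) (auto simp: dist_norm norm_minus_commute)
    also have "\<dots> \<le> 1/2"
      using \<open>0 \<le> N l\<close> by (simp add: r_def field_simps)
    finally have "N m \<le> 2 * N l"
      using \<open>l \<noteq> 0\<close> nonzero[OF \<open>m \<in> K\<close>] by (intro onorm_resolvent_le_twice)
    also have "\<dots> \<le> Max (insert 0 ((\<lambda>l. 2 * N l) ` C))"
      using C(2) l(1) by (intro Max_ge) auto
    finally show ?thesis .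
  qed
  then show ?thesis
    by blast
qed

lemma eventually_onorm_resolvent_gt: "\<forall>\<^sub>F l in at 0. c < N l"
  using onorm_resolvent_at_top by (simp add: filterlim_at_top_dense)

lemma eventually_at_0_ball: "0 < r \<Longrightarrow> \<forall>\<^sub>F l in at 0. l \<noteq> 0 \<and> cmod l < r"
  unfolding eventually_at by (intro exI[of _ r]) auto

lemma divide_ln_onorm_resolvent_tendsto_0: "((\<lambda>l. c / ln (N l)) \<longlongrightarrow> 0) (at 0)"
  using filterlim_compose[OF ln_at_top onorm_resolvent_at_top]
  by (intro tendsto_divide_0[OF tendsto_const] filterlim_at_top_imp_at_infinity)

section \<open>The exponent k x\<close>

definition log_ratio :: "'h \<Rightarrow> complex \<Rightarrow> real" where
  "log_ratio x l = ln (norm (R l x)) / ln (N l)"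

lemma kx_eq_Limsup: "kx J T x = real_of_ereal (Limsup (at 0) (\<lambda>l. ereal (log_ratio x l)))"
  by (simp add: kx_def log_ratio_def)

lemma eventually_log_ratio_ge:
  assumes "x \<noteq> 0"
  shows "\<forall>\<^sub>F l in at 0. ln (norm x / (1 + onorm T)) / ln (N l) \<le> log_ratio x l"
  using eventually_at_0_ball[OF zero_less_one] eventually_onorm_resolvent_gt[of 1]
proof eventually_elim
  case (elim l)
  have "0 \<le> onorm T"
    by (rule onorm_pos_le[OF bounded_linear_T])
  have "norm x \<le> (cmod l + onorm T) * norm (R l x)"
    using elim by (intro norm_le_resolvent) auto
  also have "\<dots> \<le> (1 + onorm T) * norm (R l x)"
    using elim by (intro mult_right_mono) auto
  finally have "ln (norm x / (1 + onorm T)) \<le> ln (norm (R l x))"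
    using assms \<open>0 \<le> onorm T\<close> by (intro ln_mono) (auto simp: divide_le_eq mult.commute)
  then show ?case
    using elim by (simp add: log_ratio_def divide_right_mono)
qed

lemma eventually_log_ratio_le:
  assumes "x \<noteq> 0"
  shows "\<forall>\<^sub>F l in at 0. log_ratio x l \<le> 1 + ln (norm x) / ln (N l)"
  using eventually_at_0_ball[OF zero_less_one] eventually_onorm_resolvent_gt[of 1]
proof eventually_elim
  case (elim l)
  have "ln (norm (R l x)) \<le> ln (N l * norm x)"
    using elim assms resolvent_nonzero[of l x] norm_resolvent_le[of l x] by (intro ln_mono) auto
  also have "\<dots> = ln (N l) + ln (norm x)"
    using elim assms by (simp add: ln_mult)
  finally show ?case
    using elim by (simp add: log_ratio_def divide_le_eq add_divide_distrib algebra_simps)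
qed

lemma Limsup_log_ratio:
  assumes "x \<noteq> 0"
  shows "Limsup (at 0) (\<lambda>l. ereal (log_ratio x l)) = ereal (kx J T x)" and "0 \<le> kx J T x"
proof -
  let ?c = "ln (norm x / (1 + onorm T))"
  have "Limsup (at 0) (\<lambda>l. ereal (?c / ln (N l))) \<le> Limsup (at 0) (\<lambda>l. ereal (log_ratio x l))"
    using eventually_log_ratio_ge[OF assms] by (intro Limsup_mono) simp
  moreover have "Limsup (at 0) (\<lambda>l. ereal (?c / ln (N l))) = ereal 0"
    by (intro lim_imp_Limsup trivial_limit_at tendsto_ereal divide_ln_onorm_resolvent_tendsto_0)
  moreover have "Limsup (at 0) (\<lambda>l. ereal (log_ratio x l)) \<le> Limsup (at 0) (\<lambda>l. ereal (1 + ln (norm x) / ln (N l)))"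
    using eventually_log_ratio_le[OF assms] by (intro Limsup_mono) simp
  moreover have "Limsup (at 0) (\<lambda>l. ereal (1 + ln (norm x) / ln (N l))) = ereal (1 + 0)"
    by (intro lim_imp_Limsup trivial_limit_at tendsto_ereal tendsto_add tendsto_const
        divide_ln_onorm_resolvent_tendsto_0)
  ultimately obtain k where k: "Limsup (at 0) (\<lambda>l. ereal (log_ratio x l)) = ereal k" "0 \<le> k"
    by (cases "Limsup (at 0) (\<lambda>l. ereal (log_ratio x l))") auto
  then show "Limsup (at 0) (\<lambda>l. ereal (log_ratio x l)) = ereal (kx J T x)" "0 \<le> kx J T x"
    by (simp_all add: kx_eq_Limsup)
qed

lemma eventually_log_ratio_less:
  assumes "x \<noteq> 0" "kx J T x < b"
  shows "\<forall>\<^sub>F l in at 0. log_ratio x l < b"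
proof -
  have "Limsup (at 0) (\<lambda>l. ereal (log_ratio x l)) < ereal b"
    using assms by (simp add: Limsup_log_ratio(1))
  then show ?thesis
    using Limsup_lessD by fastforce
qed

lemma frequently_log_ratio_greater:
  assumes "x \<noteq> 0" "b < kx J T x"
  shows "\<exists>\<^sub>F l in at 0. b < log_ratio x l"
proof (rule ccontr)
  assume "\<not> ?thesis"
  then have "\<forall>\<^sub>F l in at 0. ereal (log_ratio x l) \<le> ereal b"
    by (simp add: not_frequently not_less)
  then have "Limsup (at 0) (\<lambda>l. ereal (log_ratio x l)) \<le> ereal b"
    by (rule Limsup_bounded)
  then show False
    using assms by (simp add: Limsup_log_ratio(1))
qed

lemma Limsup_log_ratio_le:
  assumes "x \<noteq> 0" "0 < r" "0 < C"
    and bound: "\<And>l. l \<noteq> 0 \<Longrightarrow> cmod l < r \<Longrightarrow> norm (R l x) \<le> C * N l powr s"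
  shows "Limsup (at 0) (\<lambda>l. ereal (log_ratio x l)) \<le> ereal s"
proof -
  have "\<forall>\<^sub>F l in at 0. ereal (log_ratio x l) \<le> ereal (s + ln C / ln (N l))"
    using eventually_at_0_ball[OF \<open>0 < r\<close>] eventually_onorm_resolvent_gt[of 1]
  proof eventually_elim
    case (elim l)
    have "N l powr (ln C / ln (N l)) = C"
      using elim \<open>0 < C\<close> by (simp add: powr_def)
    then have "N l powr (s + ln C / ln (N l)) = C * N l powr s"
      by (simp add: powr_add)
    then have "norm (R l x) \<le> N l powr (s + ln C / ln (N l))"
      using bound elim by simp
    then show ?case
      using elim ln_ratio_le_iff resolvent_nonzero[of l x] \<open>x \<noteq> 0\<close> by (simp add: log_ratio_def)
  qed
  then have "Limsup (at 0) (\<lambda>l. ereal (log_ratio x l)) \<le> Limsup (at 0) (\<lambda>l. ereal (s + ln C / ln (N l)))"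
    by (rule Limsup_mono)
  also have "\<dots> = ereal (s + 0)"
    by (intro lim_imp_Limsup trivial_limit_at tendsto_ereal tendsto_add tendsto_const
        divide_ln_onorm_resolvent_tendsto_0)
  finally show ?thesis
    by simp
qed

lemma Limsup_log_ratio_ge:
  assumes "x \<noteq> 0" "z \<longlonglongrightarrow> 0" "\<And>n. z n \<noteq> 0"
    and bound: "\<And>n. N (z n) powr b n \<le> norm (R (z n) x)" and "b \<longlonglongrightarrow> s"
  shows "ereal s \<le> Limsup (at 0) (\<lambda>l. ereal (log_ratio x l))"
proof (rule ccontr)
  assume "\<not> ?thesis"
  then have "Limsup (at 0) (\<lambda>l. ereal (log_ratio x l)) < ereal s"
    by (simp add: not_le)
  then obtain t where t: "Limsup (at 0) (\<lambda>l. ereal (log_ratio x l)) < ereal t" "ereal t < ereal s"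
    using ereal_dense2 by blast
  have "filterlim z (at 0) sequentially"
    using assms(2,3) by (intro filterlim_atI) auto
  moreover have "\<forall>\<^sub>F l in at 0. log_ratio x l < t \<and> 1 < N l"
    using Limsup_lessD[OF t(1)] eventually_onorm_resolvent_gt[of 1] by eventually_elim simp
  ultimately have "\<forall>\<^sub>F n in sequentially. log_ratio x (z n) < t \<and> 1 < N (z n)"
    by (rule eventually_compose_filterlim[rotated])
  moreover have "\<forall>\<^sub>F n in sequentially. t < b n"
    using \<open>b \<longlonglongrightarrow> s\<close> t(2) by (intro order_tendstoD) simp_all
  ultimately have "\<forall>\<^sub>F n in sequentially. False"
  proof eventually_elim
    case (elim n)
    have "0 < norm (R (z n) x)"
      using resolvent_nonzero[OF assms(3) \<open>x \<noteq> 0\<close>] by simp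
    then have "\<not> log_ratio x (z n) < b n"
      using ln_ratio_less_iff[of "N (z n)" "norm (R (z n) x)" "b n"] elim bound[of n]
      by (simp add: log_ratio_def)
    then show False
      using elim by linarith
  qed
  then show False
    by simp
qed

section \<open>Gliding hump\<close>

text \<open>Near 0 the bound comes from k x < b; on the remaining annulus N is bounded by
  compactness.\<close>

lemma resolvent_growth_bound:
  assumes "x \<noteq> 0" "kx J T x < b" "0 < r" and big: "\<And>l. l \<noteq> 0 \<Longrightarrow> cmod l < r \<Longrightarrow> 1 < N l"
  shows "\<exists>M>0. \<forall>l. l \<noteq> 0 \<longrightarrow> cmod l < r \<longrightarrow> norm (R l x) \<le> M * N l powr b"
proof -
  obtain d where d: "0 < d" "\<And>l. l \<noteq> 0 \<Longrightarrow> cmod l < d \<Longrightarrow> log_ratio x l < b"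
    using eventually_log_ratio_less[OF assms(1,2)] unfolding eventually_at by (auto simp: dist_norm)
  define K where "K = cball 0 r - ball (0::complex) (min d r)"
  have "compact K" "0 \<notin> K"
    using \<open>0 < d\<close> \<open>0 < r\<close> by (auto simp: K_def compact_diff)
  then obtain B where B: "\<And>l. l \<in> K \<Longrightarrow> N l \<le> B"
    using onorm_resolvent_bounded_on_compact by blast
  define M where "M = max 1 (B * norm x)"
  have "0 \<le> b"
    using Limsup_log_ratio(2)[OF assms(1)] assms(2) by linarith
  have "norm (R l x) \<le> M * N l powr b" if l: "l \<noteq> 0" "cmod l < r" for l
  proof -
    have "1 \<le> N l powr b"
      using big[OF l] \<open>0 \<le> b\<close> by (simp add: ge_one_powr_ge_zero)
    show ?thesis
    proof (cases "cmod l < d")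
      case True
      have "0 < norm (R l x)"
        using resolvent_nonzero[OF l(1) assms(1)] by simp
      then have "norm (R l x) < N l powr b"
        using d(2)[OF l(1) True] big[OF l] ln_ratio_less_iff[of "N l" "norm (R l x)" b]
        by (simp add: log_ratio_def)
      also have "\<dots> \<le> M * N l powr b"
        using mult_right_mono[of 1 M "N l powr b"] by (simp add: M_def)
      finally show ?thesis
        by simp
    next
      case False
      then have "l \<in> K"
        using l by (auto simp: K_def)
      have "norm (R l x) \<le> N l * norm x"
        by (rule norm_resolvent_le[OF l(1)])
      also have "\<dots> \<le> M"
        using B[OF \<open>l \<in> K\<close>] mult_right_mono[of "N l" B "norm x"] by (simp add: M_def)
      also have "\<dots> \<le> M * N l powr b"
        using \<open>1 \<le> N l powr b\<close> mult_left_mono[of 1 "N l powr b" M] by (simp add: M_def)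
      finally show ?thesis .
    qed
  qed
  then show ?thesis
    by (intro exI[of _ M]) (simp add: M_def)
qed

lemma resolvent_hump_near_0:
  assumes "y \<noteq> 0" "\<beta> < p" "p < kx J T y" "0 < K" "0 < \<rho>"
  obtains l where "l \<noteq> 0" "cmod l < \<rho>" "1 < N l" "N l powr p \<le> norm (R l y)"
    "K * N l powr \<beta> \<le> N l powr p"
proof -
  have "((\<lambda>l. N l powr (\<beta> - p)) \<longlongrightarrow> 0) (at 0)"
    using \<open>\<beta> < p\<close> onorm_resolvent_at_top by (intro tendsto_neg_powr) auto
  then have "\<forall>\<^sub>F l in at 0. N l powr (\<beta> - p) < 1 / K"
    using \<open>0 < K\<close> by (intro order_tendstoD) auto
  then have "\<forall>\<^sub>F l in at 0. K * N l powr \<beta> \<le> N l powr p \<and> 1 < N l \<and> l \<noteq> 0 \<and> cmod l < \<rho>"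
    using eventually_onorm_resolvent_gt[of 1] eventually_at_0_ball[OF \<open>0 < \<rho>\<close>]
  proof eventually_elim
    case (elim l)
    have "K * N l powr \<beta> = (K * N l powr (\<beta> - p)) * N l powr p"
      by (simp add: powr_add[symmetric])
    also have "\<dots> \<le> 1 * N l powr p"
      using elim \<open>0 < K\<close> by (intro mult_right_mono) (simp_all add: field_simps)
    finally show ?case
      using elim by simp
  qed
  from frequently_eventually_conj[OF frequently_log_ratio_greater[OF assms(1,3)] this]
  obtain l where l: "K * N l powr \<beta> \<le> N l powr p" "1 < N l" "l \<noteq> 0" "cmod l < \<rho>"
    "p < log_ratio y l"
    by (auto dest: frequently_ex)
  moreover have "0 < norm (R l y)"
    using resolvent_nonzero[of l y] l \<open>y \<noteq> 0\<close> by simp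
  ultimately show thesis
    using that ln_ratio_le_iff[of "N l" "norm (R l y)" p] by (simp add: log_ratio_def)
qed

text \<open>The weight of the term n+1 is fixed before the point z n, and z n before the weights of
  the later terms, so that at z n the term n+1 dominates the whole sum.\<close>

lemma hump_sequence:
  assumes "\<And>n. y (Suc n) \<noteq> 0" and "\<And>n. \<beta> n < p n" "\<And>n. p n < kx J T (y (Suc n))"
    and w: "\<And>n. 0 < w n" and "0 < r"
  obtains e z where "\<And>j. 0 < e j" "\<And>j. e j \<le> 1" "\<And>j. e (Suc j) \<le> e j"
    and "\<And>n. z n \<noteq> 0" "\<And>n. cmod (z n) < min r (inverse (real (Suc n)))"
    and "\<And>n. 8 * N (z n) powr \<beta> n \<le> w (Suc n) * e (Suc n) * norm (R (z n) (y (Suc n)))"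
    and "\<And>n. 4 * e (Suc (Suc n)) * N (z n) \<le> w (Suc n) * e (Suc n) * norm (R (z n) (y (Suc n)))"
proof -
  define H where "H n d l \<longleftrightarrow> l \<noteq> 0 \<and> cmod l < min r (inverse (real (Suc n))) \<and> 1 < N l \<and>
      N l powr p n \<le> norm (R l (y (Suc n))) \<and> 8 * N l powr \<beta> n \<le> w (Suc n) * d * N l powr p n"
    for n d l
  define g where "g n d l = w (Suc n) * d * N l powr p n / (4 * N l)" for n d l
  have hump_exists: "\<exists>l. H n d l" if "0 < d" for n d
  proof -
    have wd: "0 < w (Suc n) * d"
      using w that by simp
    obtain l where "l \<noteq> 0" "cmod l < min r (inverse (real (Suc n)))" "1 < N l"
      "N l powr p n \<le> norm (R l (y (Suc n)))" "8 / (w (Suc n) * d) * N l powr \<beta> n \<le> N l powr p n"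
      by (rule resolvent_hump_near_0[of "y (Suc n)" "\<beta> n" "p n" "8 / (w (Suc n) * d)"
            "min r (inverse (real (Suc n)))"])
        (use wd assms in auto)
    with wd show ?thesis
      by (intro exI[of _ l]) (auto simp: H_def field_simps)
  qed
  have g_pos: "0 < g n d l" if "0 < d" "H n d l" for n d l
    using that w by (simp add: g_def H_def)
  obtain e z where e: "\<And>j. 0 < e j" "\<And>j. e j \<le> 1" "\<And>j. e (Suc j) \<le> e j"
    and H: "\<And>n. H n (e (Suc n)) (z n)" and g: "\<And>n. e (Suc (Suc n)) \<le> g n (e (Suc n)) (z n)"
    using decreasing_weights_choice[of H g, OF hump_exists g_pos] by blast
  have Hn: "z n \<noteq> 0" "cmod (z n) < min r (inverse (real (Suc n)))" "1 < N (z n)"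
    "N (z n) powr p n \<le> norm (R (z n) (y (Suc n)))"
    "8 * N (z n) powr \<beta> n \<le> w (Suc n) * e (Suc n) * N (z n) powr p n" for n
    using H[of n] unfolding H_def by auto
  have dominant: "w (Suc n) * e (Suc n) * N (z n) powr p n
      \<le> w (Suc n) * e (Suc n) * norm (R (z n) (y (Suc n)))" for n
    using Hn(4) w[of "Suc n"] e(1)[of "Suc n"] by (intro mult_left_mono) auto
  have "4 * e (Suc (Suc n)) * N (z n) \<le> w (Suc n) * e (Suc n) * N (z n) powr p n" for n
    using g[of n] Hn(3)[of n] by (simp add: g_def pos_le_divide_eq mult.commute mult.left_commute)
  then show thesis
    using that[of e z] e Hn(1,2) order_trans[OF Hn(5) dominant] order_trans[OF _ dominant]
    by simp
qed

end

locale hump_superposition = quasinilpotent_operator J T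
  for J :: "'h::{real_inner, complete_space} \<Rightarrow> 'h" and T +
  fixes y :: "nat \<Rightarrow> 'h" and \<beta> :: "nat \<Rightarrow> real" and r :: real
    and c e :: "nat \<Rightarrow> real" and z :: "nat \<Rightarrow> complex"
  assumes mono_\<beta>: "mono \<beta>"
    and onorm_gt_1: "\<And>l. l \<noteq> 0 \<Longrightarrow> cmod l < r \<Longrightarrow> 1 < onorm (resolvent J T l)"
    and c_pos: "0 < c j"
    and term_growth: "\<And>l. l \<noteq> 0 \<Longrightarrow> cmod l < r \<Longrightarrow>
      c j * norm (resolvent J T l (y j)) \<le> (1/2)^j * onorm (resolvent J T l) powr \<beta> j"
    and term_small: "c j * norm (y j) \<le> (1/2)^j * e j"
    and e_nonneg: "0 \<le> e j" and e_le_1: "e j \<le> 1" and e_Suc_le: "e (Suc j) \<le> e j"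
    and z_nonzero: "z n \<noteq> 0" and z_small: "cmod (z n) < min r (inverse (real (Suc n)))"
    and hump_head: "8 * onorm (resolvent J T (z n)) powr \<beta> n
      \<le> c (Suc n) * norm (resolvent J T (z n) (y (Suc n)))"
    and hump_tail: "4 * e (Suc (Suc n)) * onorm (resolvent J T (z n))
      \<le> c (Suc n) * norm (resolvent J T (z n) (y (Suc n)))"
begin

definition superposition :: 'h where
  "superposition = (\<Sum>j. c j *\<^sub>R y j)"

lemma summable_superposition: "summable (\<lambda>j. c j *\<^sub>R y j)"
proof (rule norm_suminf_le_geometric(1))
  fix j
  have "norm (c j *\<^sub>R y j) \<le> (1/2)^j * e j"
    using term_small c_pos[of j] by simp
  also have "\<dots> \<le> (1/2)^j * 1"
    using e_le_1 by (intro mult_left_mono) auto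
  finally show "norm (c j *\<^sub>R y j) \<le> (1/2)^j * 1" .
qed

lemma resolvent_superposition: "l \<noteq> 0 \<Longrightarrow> R l superposition = (\<Sum>j. c j *\<^sub>R R l (y j))"
proof -
  assume "l \<noteq> 0"
  interpret Rl: bounded_linear "R l"
    by (rule resolvent_inverse(1)[OF \<open>l \<noteq> 0\<close>])
  show ?thesis
    unfolding superposition_def Rl.suminf[OF summable_superposition] by (simp add: Rl.scale)
qed

lemma norm_term_le_onorm:
  assumes "l \<noteq> 0"
  shows "norm (c j *\<^sub>R R l (y j)) \<le> (1/2)^j * (e j * N l)"
proof -
  have "norm (c j *\<^sub>R R l (y j)) \<le> c j * (N l * norm (y j))"
    using norm_resolvent_le[OF assms, of "y j"] c_pos[of j] by (simp add: mult_left_mono)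
  also have "\<dots> = (c j * norm (y j)) * N l"
    by (simp add: mult_ac)
  also have "\<dots> \<le> ((1/2)^j * e j) * N l"
    using term_small onorm_resolvent_nonneg[OF assms] by (rule mult_right_mono)
  finally show ?thesis
    by (simp add: mult_ac)
qed

lemma summable_resolvent_terms:
  assumes "l \<noteq> 0"
  shows "summable (\<lambda>j. c j *\<^sub>R R l (y j))"
proof (rule norm_suminf_le_geometric(1))
  show "norm (c j *\<^sub>R R l (y j)) \<le> (1/2)^j * N l" for j
    using norm_term_le_onorm[OF assms, of j] mult_right_mono[OF e_le_1[of j] onorm_resolvent_nonneg[OF assms]]
    by (simp add: order_trans[OF _ mult_left_mono])
qed

lemma norm_resolvent_superposition_le:
  assumes "\<And>j. \<beta> j \<le> s" "l \<noteq> 0" "cmod l < r"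
  shows "norm (R l superposition) \<le> 2 * N l powr s"
  unfolding resolvent_superposition[OF \<open>l \<noteq> 0\<close>]
proof (rule norm_suminf_le_geometric(2))
  fix j
  have "N l powr \<beta> j \<le> N l powr s"
    using onorm_gt_1[OF assms(2,3)] assms(1) by (intro powr_mono) auto
  then show "norm (c j *\<^sub>R R l (y j)) \<le> (1/2)^j * N l powr s"
    using term_growth[OF assms(2,3), of j] c_pos[of j] by (simp add: order_trans[OF _ mult_left_mono])
qed

lemma norm_resolvent_superposition_ge: "N (z n) powr \<beta> n \<le> norm (R (z n) superposition)"
proof -
  let ?u = "\<lambda>j. c j *\<^sub>R R (z n) (y j)" and ?A = "N (z n) powr \<beta> n"
    and ?B = "e (Suc (Suc n)) * N (z n) / 4"
  have z: "z n \<noteq> 0" "cmod (z n) < r" "1 < N (z n)"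
    using z_nonzero z_small onorm_gt_1 by auto
  have "summable ?u"
    using z(1) by (rule summable_resolvent_terms)
  have head: "norm (?u i) \<le> (1/2)^i * ?A" if "i < Suc n" for i
  proof -
    have "N (z n) powr \<beta> i \<le> ?A"
      using z(3) monoD[OF mono_\<beta>, of i n] that by (intro powr_mono) auto
    then show ?thesis
      using term_growth[OF z(1,2), of i] c_pos[of i] by (simp add: order_trans[OF _ mult_left_mono])
  qed
  have tail: "norm (?u (i + Suc (Suc n))) \<le> (1/2)^i * ?B" for i
  proof -
    have "norm (?u (i + Suc (Suc n))) \<le> (1/2)^(i + Suc (Suc n)) * (e (i + Suc (Suc n)) * N (z n))"
      by (rule norm_term_le_onorm[OF z(1)])
    also have "\<dots> \<le> (1/2)^(i + 2) * (e (Suc (Suc n)) * N (z n))"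
      using lift_Suc_antimono_le[of e, OF e_Suc_le, of "Suc (Suc n)" "i + Suc (Suc n)"] e_nonneg z(3)
      by (intro mult_mono power_decreasing) auto
    finally show ?thesis
      by (simp add: power_add)
  qed
  have "norm (?u (Suc n)) = c (Suc n) * norm (R (z n) (y (Suc n)))"
    using c_pos[of "Suc n"] by simp
  then have "norm (?u (Suc n)) - 2 * ?A - 2 * ?B \<ge> ?A"
    using hump_head[of n] hump_tail[of n, unfolded mult.assoc] powr_ge_zero[of "N (z n)" "\<beta> n"]
    by linarith
  moreover have "norm (?u (Suc n)) - 2 * ?A - 2 * ?B \<le> norm (suminf ?u)"
    using head tail \<open>summable ?u\<close> by (intro norm_suminf_ge_hump) auto
  ultimately show ?thesis
    using resolvent_superposition[OF z(1)] by simp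
qed

lemma superposition_nonzero: "superposition \<noteq> 0"
proof
  assume "superposition = 0"
  then have "R (z 0) superposition = 0"
    using linear_0[OF bounded_linear.linear[OF resolvent_inverse(1)[OF z_nonzero]]] by simp
  moreover have "0 < N (z 0) powr \<beta> 0"
    using onorm_gt_1[OF z_nonzero[of 0]] z_small[of 0] by simp
  ultimately show False
    using norm_resolvent_superposition_ge[of 0] by simp
qed

lemma z_tendsto_0: "z \<longlonglongrightarrow> 0"
proof (rule Lim_null_comparison)
  show "\<forall>\<^sub>F n in sequentially. norm (z n) \<le> inverse (real (Suc n))"
    by (rule always_eventually) (use z_small less_imp_le in auto)
qed (rule LIMSEQ_inverse_real_of_nat)

lemma kx_superposition:
  assumes "\<beta> \<longlonglongrightarrow> s"
  shows "kx J T superposition = s"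
proof -
  have "\<beta> j \<le> s" for j
    using mono_\<beta> assms by (rule incseq_le)
  moreover have "0 < r"
    using z_small[of 0] norm_ge_zero[of "z 0"] by linarith
  ultimately have "Limsup (at 0) (\<lambda>l. ereal (log_ratio superposition l)) \<le> ereal s"
    using norm_resolvent_superposition_le
    by (intro Limsup_log_ratio_le[OF superposition_nonzero, where C = 2]) auto
  moreover have "ereal s \<le> Limsup (at 0) (\<lambda>l. ereal (log_ratio superposition l))"
    by (rule Limsup_log_ratio_ge[OF superposition_nonzero z_tendsto_0 z_nonzero
          norm_resolvent_superposition_ge assms])
  ultimately show ?thesis
    by (simp add: kx_eq_Limsup)
qed

end

lemma (in quasinilpotent_operator) hump_superposition_exists:
  assumes "\<And>n. y n \<noteq> 0" and "\<And>n. \<beta> n < p n" "\<And>n. p n < kx J T (y (Suc n))"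
    and "mono \<beta>" "0 < r" and "\<And>l. l \<noteq> 0 \<Longrightarrow> cmod l < r \<Longrightarrow> 1 < N l"
    and M: "\<And>j. 0 < M j" "\<And>j l. l \<noteq> 0 \<Longrightarrow> cmod l < r \<Longrightarrow> norm (R l (y j)) \<le> M j * N l powr \<beta> j"
  obtains c e z where "hump_superposition J T y \<beta> r c e z"
proof -
  define w where "w j = (1/2)^j / (M j + norm (y j))" for j
  have w: "0 < w j" "w j * M j \<le> (1/2)^j" "w j * norm (y j) \<le> (1/2)^j" for j
    using M(1)[of j] by (auto simp: w_def field_simps add_pos_nonneg)
  obtain e z where e: "\<And>j. 0 < e j" "\<And>j. e j \<le> 1" "\<And>j. e (Suc j) \<le> e j"
    and z: "\<And>n. z n \<noteq> 0" "\<And>n. cmod (z n) < min r (inverse (real (Suc n)))"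
    and hump: "\<And>n. 8 * N (z n) powr \<beta> n \<le> w (Suc n) * e (Suc n) * norm (R (z n) (y (Suc n)))"
      "\<And>n. 4 * e (Suc (Suc n)) * N (z n) \<le> w (Suc n) * e (Suc n) * norm (R (z n) (y (Suc n)))"
    using hump_sequence[of y \<beta> p w r] assms w(1) by blast
  have "hump_superposition J T y \<beta> r (\<lambda>j. w j * e j) e z"
  proof unfold_locales
    fix j l
    assume l: "l \<noteq> 0" "cmod l < r"
    have "w j * e j * norm (R l (y j)) \<le> w j * e j * (M j * N l powr \<beta> j)"
      using M(2)[OF l] w(1) e(1) by (intro mult_left_mono) (auto intro: less_imp_le)
    also have "\<dots> = (w j * M j) * e j * N l powr \<beta> j"
      by simp
    also have "\<dots> \<le> (1/2)^j * 1 * N l powr \<beta> j"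
      using w(2) e(1,2) by (intro mult_right_mono mult_mono) (auto intro: less_imp_le)
    finally show "w j * e j * norm (R l (y j)) \<le> (1/2)^j * N l powr \<beta> j"
      by simp
  next
    fix j
    show "w j * e j * norm (y j) \<le> (1/2)^j * e j"
      using mult_right_mono[OF w(3) less_imp_le[OF e(1)], of j] by (simp add: mult_ac)
  qed (use assms w e z hump in \<open>auto intro: less_imp_le simp: mult_ac\<close>)
  then show thesis
    by (rule that)
qed

lemma (in quasinilpotent_operator) limit_of_increasing_in_power_set:
  assumes y: "\<And>n. y n \<noteq> 0" and "strict_mono (\<lambda>n. kx J T (y n))"
    and "(\<lambda>n. kx J T (y n)) \<longlonglongrightarrow> s"
  shows "s \<in> power_set J T"
proof -
  obtain \<beta> p where \<beta>: "\<And>n. kx J T (y n) < \<beta> n" "\<And>n. \<beta> n < p n" "\<And>n. p n < kx J T (y (Suc n))"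
    "mono \<beta>" "\<beta> \<longlonglongrightarrow> s"
    using interlacing_sequences[OF assms(2,3)] by blast
  obtain r where r: "0 < r" "\<And>l. l \<noteq> 0 \<Longrightarrow> cmod l < r \<Longrightarrow> 1 < N l"
    using eventually_onorm_resolvent_gt[of 1] unfolding eventually_at by (auto simp: dist_norm)
  have "\<exists>M>0. \<forall>l. l \<noteq> 0 \<longrightarrow> cmod l < r \<longrightarrow> norm (R l (y j)) \<le> M * N l powr \<beta> j" for j
    using r \<beta>(1) by (intro resolvent_growth_bound y) auto
  then obtain M where "\<And>j. 0 < M j"
    "\<And>j l. l \<noteq> 0 \<Longrightarrow> cmod l < r \<Longrightarrow> norm (R l (y j)) \<le> M j * N l powr \<beta> j"
    by metis
  then obtain c e z where "hump_superposition J T y \<beta> r c e z"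
    using hump_superposition_exists[OF y \<beta>(2,3,4) r] by blast
  then interpret hump_superposition J T y \<beta> r c e z .
  show ?thesis
    using superposition_nonzero kx_superposition[OF \<beta>(5)] by (auto simp: power_set_def)
qed

lemma (in quasinilpotent_operator) Sup_in_power_set:
  assumes "Y \<noteq> {}" "Y \<subseteq> power_set J T" "bdd_above Y"
  shows "Sup Y \<in> power_set J T"
proof (cases "Sup Y \<in> Y")
  case False
  then obtain a where a: "\<And>n. a n \<in> Y" "strict_mono a" "a \<longlonglongrightarrow> Sup Y"
    using strict_mono_tendsto_Sup[OF assms(1,3)] by blast
  have "\<exists>y. y \<noteq> 0 \<and> kx J T y = a n" for n
  proof -
    have "a n \<in> power_set J T"
      using a(1) assms(2) by blast
    then obtain y where "y \<noteq> 0" "a n = kx J T y"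
      unfolding power_set_def by blast
    then show ?thesis
      by metis
  qed
  then obtain y where "\<And>n. y n \<noteq> 0" "\<And>n. kx J T (y n) = a n"
    by metis
  with a show ?thesis
    by (intro limit_of_increasing_in_power_set) auto
qed (use assms in blast)

text \<open>Separability and infinite dimension are used only to have a nonzero vector.\<close>

theorem theoremA:
  fixes J :: "'h::{real_inner, complete_space} \<Rightarrow> 'h" and T :: "'h \<Rightarrow> 'h"
  assumes "complex_structure J"
    and "separable_space (euclidean :: 'h topology)"
    and "\<not> (\<exists>B. finite B \<and> span B = (UNIV :: 'h set))"
    and "quasinilpotent J T"
  shows "right_closed (power_set J T)"
proof -
  interpret quasinilpotent_operator J T
    using assms(1,4) by unfold_locales
  have "(UNIV :: 'h set) \<noteq> {0}"
    using assms(3) by (metis finite.emptyI span_empty)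
  then have "power_set J T \<noteq> {}"
    by (auto simp: power_set_def)
  then show ?thesis
    unfolding right_closed_def using Sup_in_power_set by blast
qed

end
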